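(* Let $P_1,\ldots,P_n$ be mutually orthogonal self-adjoint projections on a real or complex Hilbert space $\mathcal{H}$, all of the same nonzero rank $k$, where $k$ may be finite or infinite. Let $r_1,\ldots,r_n\ge0$ be real numbers with $r=\sum_{i=1}^n r_i$, and set $A=r_1P_1+\cdots+r_nP_n$. If $r$ is an integer and $r\ge n$, then there exist self-adjoint projections $Q_1,\ldots,Q_r$, each of rank $k$, such that $A=Q_1+\cdots+Q_r$. *)

theory Defs
  imports "HOL-Analysis.Analysis" "HOL-Library.Equipollence"
begin

text \<open>A Hilbert space is a type of class real_inner and complete_space.
  The scalar field is encoded by an operator J: J = id means the real
  Hilbert space itself; a complex structure J (real-linear, J o J = -id,
  orthogonal) turns the real Hilbert space into a complex Hilbert space
  with complex inner product  inner x y + i * inner x (J y)  and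
  scalar multiplication (a + i b) x = a x + b J x.\<close>

definition complex_structure :: "('a::real_inner \<Rightarrow> 'a) \<Rightarrow> bool" where
  "complex_structure J \<longleftrightarrow> bounded_linear J \<and> (\<forall>x. J (J x) = - x)
     \<and> (\<forall>x y. inner (J x) (J y) = inner x y)"

definition scalar_structure :: "('a::real_inner \<Rightarrow> 'a) \<Rightarrow> bool" where
  "scalar_structure J \<longleftrightarrow> J = id \<or> complex_structure J"

definition sa_projection :: "('a::real_inner \<Rightarrow> 'a) \<Rightarrow> ('a \<Rightarrow> 'a) \<Rightarrow> bool" where
  "sa_projection J P \<longleftrightarrow> bounded_linear P \<and> (\<forall>x. P (P x) = P x)
     \<and> (\<forall>x y. inner (P x) y = inner x (P y)) \<and> (\<forall>x. P (J x) = J (P x))"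

definition orthonormal_basis_of :: "('a::real_inner \<Rightarrow> 'a) \<Rightarrow> 'a set \<Rightarrow> 'a set \<Rightarrow> bool" where
  "orthonormal_basis_of J B V \<longleftrightarrow> B \<subseteq> V \<and> (\<forall>x\<in>B. norm x = 1)
     \<and> (\<forall>x\<in>B. \<forall>y\<in>B. x \<noteq> y \<longrightarrow> inner x y = 0 \<and> inner x (J y) = 0)
     \<and> closure (span (B \<union> J ` B)) = V"

definition same_rank :: "('a::real_inner \<Rightarrow> 'a) \<Rightarrow> ('a \<Rightarrow> 'a) \<Rightarrow> ('a \<Rightarrow> 'a) \<Rightarrow> bool" where
  "same_rank J P Q \<longleftrightarrow> (\<exists>B C. orthonormal_basis_of J B (range P)
     \<and> orthonormal_basis_of J C (range Q) \<and> B \<approx> C)"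

end

theory Submission
  imports Defs
begin

text \<open>Since all P i have the rank of P 0, each P a is Murray-von Neumann equivalent to P 0: mapping an
  orthonormal basis of range (P 0) bijectively onto one of range (P a) and extending by continuity
  gives a partial isometry T a from range (P 0) onto range (P a), with adjoint S a.
  Next, there is a real n x m matrix F whose columns are unit vectors and whose rows are orthogonal
  with squared lengths r a: start from the diagonal matrix with entries sqrt (r a), padded by zero
  columns; as long as some column is not a unit vector, the squared column lengths average to 1, so
  one column is too short and another too long, and rotating these two columns against each other
  (intermediate value theorem) makes the short one a unit vector without changing the inner
  products of the rows.
  Because the ranges of the T a are orthogonal, V j = sum_a F a j T a is again an isometry on
  range (P 0), so Q j = V j (V j)^* is a projection of the same rank as P 0, and
  sum_j Q j = sum_(a,b) (sum_j F a j F b j) T a S b = sum_a r a P a.\<close>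

section \<open>Scalar structures, projections and orthonormal bases\<close>

lemma scalar_structure_bounded_linear: "scalar_structure J \<Longrightarrow> bounded_linear J"
  by (auto simp: scalar_structure_def complex_structure_def id_def)

lemma scalar_structure_inner: "scalar_structure J \<Longrightarrow> inner (J x) (J y) = inner x y"
  by (auto simp: scalar_structure_def complex_structure_def)

lemma complex_structure_inner_self: "complex_structure J \<Longrightarrow> inner x (J x) = 0"
proof -
  assume J: "complex_structure J"
  have "inner x (J x) = inner (J x) (J (J x))" using J unfolding complex_structure_def by metis
  also have "\<dots> = - inner x (J x)" using J by (simp add: complex_structure_def inner_commute)
  finally show ?thesis by simp
qed

lemma sa_projection_range_iff: "sa_projection J P \<Longrightarrow> x \<in> range P \<longleftrightarrow> P x = x"
  by (metis rangeE rangeI sa_projection_def)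

lemma sa_projection_closed_range: "sa_projection J P \<Longrightarrow> closed (range P)"
proof -
  assume P: "sa_projection J P"
  then have "closed {x. P x = x}"
    by (intro closed_Collect_eq) (auto intro: linear_continuous_on simp: sa_projection_def)
  moreover have "range P = {x. P x = x}" using sa_projection_range_iff[OF P] by auto
  ultimately show ?thesis by simp
qed

lemma orthonormal_basis_of_inner:
  "orthonormal_basis_of J B V \<Longrightarrow> b \<in> B \<Longrightarrow> b' \<in> B \<Longrightarrow> inner b b' = (if b = b' then 1 else 0)"
  by (auto simp: orthonormal_basis_of_def norm_eq_1)

lemma orthonormal_basis_of_inner_J:
  assumes J: "scalar_structure J" and B: "orthonormal_basis_of J B V" and "b \<in> B" "b' \<in> B"
  shows "inner b (J b') = (if b = b' \<and> J = id then 1 else 0)"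
proof (cases "b = b'")
  case True
  then show ?thesis
    using assms complex_structure_inner_self
    by (auto simp: scalar_structure_def orthonormal_basis_of_inner[OF B])
qed (use assms in \<open>auto simp: orthonormal_basis_of_def\<close>)

lemma orthonormal_basis_of_J_notin:
  assumes J: "complex_structure J" and B: "orthonormal_basis_of J B V" and b: "b \<in> B"
  shows "J b \<notin> B"
proof
  assume Jb: "J b \<in> B"
  have s: "scalar_structure J" using J by (simp add: scalar_structure_def)
  have "J \<noteq> id"
    using complex_structure_inner_self[OF J, of b] orthonormal_basis_of_inner[OF B b b] by auto
  then have "inner (J b) (J b) = 0" using orthonormal_basis_of_inner_J[OF s B Jb b] by simp
  then show False
    using orthonormal_basis_of_inner[OF B b b] scalar_structure_inner[OF s] by simp
qed

lemma orthonormal_basis_of_independent: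
  assumes J: "scalar_structure J" and B: "orthonormal_basis_of J B V"
  shows "independent (B \<union> J ` B)"
proof (rule pairwise_orthogonal_independent)
  have BJ: "\<And>b b'. b \<in> B \<Longrightarrow> b' \<in> B \<Longrightarrow> b \<noteq> J b' \<Longrightarrow> inner b (J b') = 0"
    using orthonormal_basis_of_inner_J[OF J B] by (auto split: if_splits)
  show "pairwise orthogonal (B \<union> J ` B)"
    unfolding pairwise_def orthogonal_def
    using orthonormal_basis_of_inner[OF B] scalar_structure_inner[OF J] BJ
    by (auto simp: inner_commute)
  have "inner (J b) (J b) = 1" if "b \<in> B" for b
    using orthonormal_basis_of_inner[OF B that that] scalar_structure_inner[OF J] by simp
  then show "0 \<notin> B \<union> J ` B"
    using orthonormal_basis_of_inner[OF B] by force
qed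

lemma linear_inner_eq_on_span:
  assumes L: "linear L" and E: "\<And>e e'. e \<in> E \<Longrightarrow> e' \<in> E \<Longrightarrow> inner (L e) (L e') = inner e e'"
    and "x \<in> span E" "y \<in> span E"
  shows "inner (L x) (L y) = inner x y"
proof -
  have left: "linear (\<lambda>x. inner (L x) c)" for c
    using linear_compose[OF L bounded_linear.linear[OF bounded_linear_inner_left]] by (simp add: o_def)
  have right: "linear (\<lambda>y. inner c (L y))" for c
    using linear_compose[OF L bounded_linear.linear[OF bounded_linear_inner_right]] by (simp add: o_def)
  have inner_linear: "linear (\<lambda>x. inner x c)" "linear (\<lambda>y. inner c y)" for c
    using bounded_linear_inner_left bounded_linear_inner_right bounded_linear.linear by blast+
  have x_E: "inner (L x) (L e') = inner x e'" if "e' \<in> E" for e'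
    by (rule linear_eq_on_span[where f="\<lambda>x. inner (L x) (L e')" and g="\<lambda>x. inner x e'"])
      (use left inner_linear E that \<open>x \<in> span E\<close> in auto)
  show ?thesis
    by (rule linear_eq_on_span[where f="\<lambda>y. inner (L x) (L y)" and g="\<lambda>y. inner x y"])
      (use right inner_linear x_E \<open>y \<in> span E\<close> in auto)
qed

section \<open>Isometries between ranges of projections\<close>

lemma continuous_eq_through_projection:
  fixes h k :: "'a::topological_space \<Rightarrow> 'b::t2_space"
  assumes "continuous_on UNIV h" "continuous_on UNIV k" "\<And>x. x \<in> X \<Longrightarrow> h x = k x"
    and "range P \<subseteq> closure X" "\<And>x. h (P x) = h x" "\<And>x. k (P x) = k x"
  shows "h x = k x"
proof -
  have "closed {x. h x = k x}" using assms(1,2) by (rule closed_Collect_eq)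
  then have "closure X \<subseteq> {x. h x = k x}" using assms(3) by (intro closure_minimal) auto
  then have "h (P x) = k (P x)" using assms(4) by auto
  then show ?thesis using assms(5,6) by simp
qed

lemma continuous_eq2_through_projection:
  fixes h k :: "'a::topological_space \<Rightarrow> 'a \<Rightarrow> 'b::t2_space"
  assumes "continuous_on UNIV (\<lambda>z. h (fst z) (snd z))" "continuous_on UNIV (\<lambda>z. k (fst z) (snd z))"
    and "\<And>x y. x \<in> X \<Longrightarrow> y \<in> X \<Longrightarrow> h x y = k x y"
    and "range P \<subseteq> closure X" "\<And>x y. h (P x) (P y) = h x y" "\<And>x y. k (P x) (P y) = k x y"
  shows "h x y = k x y"
  using continuous_eq_through_projection[where h="\<lambda>z. h (fst z) (snd z)" and k="\<lambda>z. k (fst z) (snd z)"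
      and X="X \<times> X" and P="map_prod P P" and x="(x, y)"] assms
  by (simp add: closure_Times image_subset_iff mem_Times_iff)

lemma isometry_continuous_extension:
  fixes L :: "'a::real_inner \<Rightarrow> 'b::{real_inner, complete_space}"
  assumes X: "subspace X"
    and L: "linear L" "\<And>x y. x \<in> X \<Longrightarrow> y \<in> X \<Longrightarrow> inner (L x) (L y) = inner x y"
  obtains G where "continuous_on (closure X) G" "\<And>x. x \<in> X \<Longrightarrow> L x = G x"
proof -
  have "dist (L x') (L x) = dist x' x" if "x \<in> X" "x' \<in> X" for x x'
    using L(2)[of "x' - x" "x' - x"] that X
    by (simp add: dist_norm norm_eq_sqrt_inner subspace_diff linear_diff[OF L(1)])
  then have "uniformly_continuous_on X L"
    unfolding uniformly_continuous_on_def by (intro allI impI, rule_tac x=e in exI) auto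
  then obtain G where "uniformly_continuous_on (closure X) G" "\<And>x. x \<in> X \<Longrightarrow> L x = G x"
    by (rule uniformly_continuous_on_extension_on_closure) (simp only:)
  then show thesis using that uniformly_continuous_imp_continuous by blast
qed

lemma isometry_extension_through_projection:
  fixes L :: "'a::real_inner \<Rightarrow> 'b::{real_inner, complete_space}"
  assumes P: "bounded_linear P" "\<And>x. P (P x) = P x"
    and X: "subspace X" "closure X = range P"
    and L: "linear L" "\<And>x y. x \<in> X \<Longrightarrow> y \<in> X \<Longrightarrow> inner (L x) (L y) = inner x y"
  obtains T where "bounded_linear T" "\<And>x. T (P x) = T x" "\<And>x. x \<in> X \<Longrightarrow> T x = L x"
    "\<And>x y. inner (T x) (T y) = inner (P x) (P y)"
proof -
  obtain G where cont_G: "continuous_on (closure X) G" and G: "\<And>x. x \<in> X \<Longrightarrow> L x = G x"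
    using isometry_continuous_extension[OF X(1) L] by blast
  define T where "T x = G (P x)" for x
  have lin_P: "linear P" using P(1) by (rule bounded_linear.linear)
  have range_P: "range P \<subseteq> closure X" using X(2) by simp
  have cont_T: "continuous_on UNIV T"
    unfolding T_def using X(2) by (intro continuous_on_compose2[OF cont_G] linear_continuous_on P(1)) auto
  have cont_P: "continuous_on UNIV P" using P(1) by (rule linear_continuous_on)
  have TP: "T (P x) = T x" for x by (simp add: T_def P(2))
  have P_X: "P x = x" if "x \<in> X" for x
    using that closure_subset[of X] X(2) P(2) by (metis rangeE subsetD)
  have TL: "T x = L x" if "x \<in> X" for x using that G P_X by (simp add: T_def)
  have add: "T (x + y) = T x + T y" for x y
    by (rule continuous_eq2_through_projection[where h="\<lambda>x y. T (x + y)" and X=X and P=P])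
      (use X(1) range_P TP TL in \<open>auto intro!: continuous_intros continuous_on_compose2[OF cont_T _ subset_UNIV]
        simp: linear_add[OF lin_P, symmetric] linear_add[OF L(1)] subspace_add\<close>)
  have scale: "T (c *\<^sub>R x) = c *\<^sub>R T x" for c x
    by (rule continuous_eq_through_projection[where h="\<lambda>x. T (c *\<^sub>R x)" and X=X and P=P])
      (use X(1) range_P TP TL in \<open>auto intro!: continuous_intros continuous_on_compose2[OF cont_T _ subset_UNIV]
        simp: linear_scale[OF lin_P, symmetric] linear_scale[OF L(1)] subspace_scale\<close>)
  have iso: "inner (T x) (T y) = inner (P x) (P y)" for x y
    by (rule continuous_eq2_through_projection[where h="\<lambda>x y. inner (T x) (T y)"
          and k="\<lambda>x y. inner (P x) (P y)" and X=X and P=P])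
      (use range_P TP TL P_X P(2) L(2) in \<open>auto intro!: continuous_intros continuous_on_compose2[OF cont_T _ subset_UNIV]
        continuous_on_compose2[OF cont_P _ subset_UNIV]\<close>)
  obtain K where K: "\<And>x. norm (P x) \<le> norm x * K" using P(1) bounded_linear.bounded by blast
  have "bounded_linear T"
  proof (rule bounded_linear_intro[OF add scale])
    show "norm (T x) \<le> norm x * K" for x using iso[of x x] K[of x] by (simp add: norm_eq_sqrt_inner)
  qed
  then show thesis using that TP TL iso by blast
qed

lemma span_J_closed:
  assumes J: "scalar_structure J" and x: "x \<in> span (B \<union> J ` B)"
  shows "J x \<in> span (B \<union> J ` B)"
proof -
  have lin_J: "linear J" using scalar_structure_bounded_linear[OF J] by (rule bounded_linear.linear)
  have "J (J y) = y \<or> J (J y) = - y" for y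
    using J by (auto simp: scalar_structure_def complex_structure_def)
  then have "J ` (B \<union> J ` B) \<subseteq> span (B \<union> J ` B)"
    by (auto simp: span_base span_neg) (metis span_base span_neg UnI1)
  then have "J ` span (B \<union> J ` B) \<subseteq> span (B \<union> J ` B)"
    unfolding span_linear_image[OF lin_J, symmetric] by (rule span_minimal[OF _ subspace_span])
  then show ?thesis using x by blast
qed

lemma linear_commute_J_on_span:
  assumes J: "scalar_structure J" and L: "linear L" and L_J: "\<And>b. b \<in> B \<Longrightarrow> L (J b) = J (L b)"
    and x: "x \<in> span (B \<union> J ` B)"
  shows "L (J x) = J (L x)"
proof (rule linear_eq_on_span[where f="\<lambda>x. L (J x)" and g="\<lambda>x. J (L x)"])
  have lin_J: "linear J" using scalar_structure_bounded_linear[OF J] by (rule bounded_linear.linear)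
  show "linear (\<lambda>x. L (J x))" "linear (\<lambda>x. J (L x))"
    using linear_compose[OF lin_J L] linear_compose[OF L lin_J] by (simp_all add: o_def)
  show "L (J e) = J (L e)" if "e \<in> B \<union> J ` B" for e
  proof (cases "J = id")
    case False
    then have "J (J y) = - y" for y using J by (simp add: scalar_structure_def complex_structure_def)
    then show ?thesis using that L_J linear_neg[OF L] by auto
  qed simp
qed (fact x)

lemma orthonormal_bases_bij_linear_extension:
  assumes J: "scalar_structure J" and B: "orthonormal_basis_of J B V"
    and C: "orthonormal_basis_of J C W" and f: "bij_betw f B C"
  obtains L where "linear L" "\<And>b. b \<in> B \<Longrightarrow> L b = f b" "\<And>b. b \<in> B \<Longrightarrow> L (J b) = J (f b)"
    "\<And>x y. x \<in> span (B \<union> J ` B) \<Longrightarrow> y \<in> span (B \<union> J ` B) \<Longrightarrow> inner (L x) (L y) = inner x y"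
proof -
  \<comment> \<open>In the complex case J ` B is disjoint from B and J (J b) = - b, so g (J b) = J (f b).\<close>
  define g where "g e = (if e \<in> B then f e else J (f (- J e)))" for e
  have g_J: "g (J b) = J (f b)" if "b \<in> B" for b
  proof (cases "J = id")
    case False
    then have "complex_structure J" using J by (simp add: scalar_structure_def)
    then show ?thesis
      using orthonormal_basis_of_J_notin[OF _ B that] by (simp add: g_def complex_structure_def)
  qed (use that in \<open>simp add: g_def\<close>)
  obtain L where L: "linear L" "\<And>e. e \<in> B \<union> J ` B \<Longrightarrow> L e = g e"
    using linear_independent_extend[OF orthonormal_basis_of_independent[OF J B], of g] by blast
  have L_B: "L b = f b" if "b \<in> B" for b using that L(2) by (simp add: g_def)
  have L_JB: "L (J b) = J (f b)" if "b \<in> B" for b using that L(2) g_J by simp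
  have f_in: "f b \<in> C" and f_eq: "f b = f b' \<longleftrightarrow> b = b'" if "b \<in> B" "b' \<in> B" for b b'
    using that f by (auto simp: bij_betw_def inj_on_eq_iff)
  have f_inner: "inner (f b) (f b') = inner b b'" "inner (f b) (J (f b')) = inner b (J b')"
    if "b \<in> B" "b' \<in> B" for b b'
    using orthonormal_basis_of_inner[OF C f_in[OF that] f_in[OF that(2,1)]]
      orthonormal_basis_of_inner_J[OF J C f_in[OF that] f_in[OF that(2,1)]]
      orthonormal_basis_of_inner[OF B that] orthonormal_basis_of_inner_J[OF J B that] f_eq[OF that]
    by simp_all
  have Gram: "inner (L e) (L e') = inner e e'" if e: "e \<in> B \<union> J ` B" "e' \<in> B \<union> J ` B" for e e'
  proof -
    obtain b b' where b: "b \<in> B" "b' \<in> B" and "e = b \<or> e = J b" "e' = b' \<or> e' = J b'"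
      using e by blast
    then consider "e = b" "e' = b'" | "e = b" "e' = J b'" | "e = J b" "e' = b'" | "e = J b" "e' = J b'"
      by blast
    then show ?thesis
    proof cases
      case 3
      then show ?thesis using f_inner(2)[OF b(2,1)] b L_B L_JB by (simp add: inner_commute)
    qed (use f_inner[OF b] b L_B L_JB scalar_structure_inner[OF J] in simp_all)
  qed
  show thesis
    by (rule that[OF L(1) L_B L_JB linear_inner_eq_on_span[OF L(1) Gram]])
qed

lemma orthonormal_bases_bij_extension:
  fixes J :: "'a::{real_inner, complete_space} \<Rightarrow> 'a"
  assumes J: "scalar_structure J" and P: "sa_projection J P" and R: "sa_projection J R"
    and B: "orthonormal_basis_of J B (range P)" and C: "orthonormal_basis_of J C (range R)"
    and f: "bij_betw f B C"
  obtains T where "bounded_linear T" "\<And>x. T (J x) = J (T x)" "\<And>x. T (P x) = T x"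
    "\<And>x. R (T x) = T x" "\<And>x y. inner (T x) (T y) = inner (P x) (P y)" "\<And>b. b \<in> B \<Longrightarrow> T b = f b"
proof -
  define X where "X = span (B \<union> J ` B)"
  obtain L where L: "linear L" "\<And>b. b \<in> B \<Longrightarrow> L b = f b" "\<And>b. b \<in> B \<Longrightarrow> L (J b) = J (f b)"
    "\<And>x y. x \<in> X \<Longrightarrow> y \<in> X \<Longrightarrow> inner (L x) (L y) = inner x y"
    unfolding X_def using orthonormal_bases_bij_linear_extension[OF J B C f] by blast
  have lin_R: "linear R" using R by (simp add: sa_projection_def bounded_linear.linear)
  have closure_X: "closure X = range P" using B by (simp add: X_def orthonormal_basis_of_def)
  then have range_P: "range P \<subseteq> closure X" by simp
  have J_X: "J x \<in> X" if "x \<in> X" for x using span_J_closed[OF J] that by (simp add: X_def)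
  have L_J: "L (J x) = J (L x)" if "x \<in> X" for x
    using linear_commute_J_on_span[OF J L(1) _ that[unfolded X_def]] L(2,3) by simp
  have fC: "f b \<in> range R" if "b \<in> B" for b
    using that f C by (auto simp: bij_betw_def orthonormal_basis_of_def)
  have R_L: "R (L x) = L x" if "x \<in> X" for x
  proof (rule linear_eq_on_span[where f="\<lambda>x. R (L x)" and g=L])
    show "linear (\<lambda>x. R (L x))"
      using linear_compose[OF L(1) lin_R] by (simp add: o_def)
    show "x \<in> span (B \<union> J ` B)" using that by (simp add: X_def)
    show "R (L e) = L e" if "e \<in> B \<union> J ` B" for e
      using that fC L(2,3) sa_projection_range_iff[OF R] R by (auto simp: sa_projection_def)
  qed (use L(1) in simp)
  obtain T where T: "bounded_linear T" "\<And>x. T (P x) = T x" "\<And>x. x \<in> X \<Longrightarrow> T x = L x"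
    "\<And>x y. inner (T x) (T y) = inner (P x) (P y)"
    using isometry_extension_through_projection[OF _ _ subspace_span closure_X[unfolded X_def] L(1)]
      P L(4) unfolding X_def sa_projection_def by metis
  have cont: "continuous_on UNIV T" "continuous_on UNIV J" "continuous_on UNIV R"
    using T(1) scalar_structure_bounded_linear[OF J] R
    by (auto intro: linear_continuous_on simp: sa_projection_def)
  have P_J: "J (P x) = P (J x)" for x using P by (simp add: sa_projection_def)
  have T_J: "T (J x) = J (T x)" for x
    by (rule continuous_eq_through_projection[where h="\<lambda>x. T (J x)" and X=X and P=P])
      (use cont range_P T(2,3) J_X L_J P_J in \<open>auto intro: continuous_on_compose2\<close>)
  have R_T: "R (T x) = T x" for x
    by (rule continuous_eq_through_projection[where h="\<lambda>x. R (T x)" and X=X and P=P])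
      (use cont range_P T(2,3) R_L in \<open>auto intro: continuous_on_compose2\<close>)
  have T_B: "T b = f b" if "b \<in> B" for b
    using that T(3) L(2) by (simp add: X_def span_base)
  show thesis by (rule that[OF T(1) T_J T(2) R_T T(4) T_B])
qed

lemma sa_projection_eq_if_fixes_basis:
  assumes P: "sa_projection J P" and C: "orthonormal_basis_of J C (range P)"
    and K: "bounded_linear K" "\<And>x. K (J x) = J (K x)" "\<And>x. K (P x) = K x" "\<And>c. c \<in> C \<Longrightarrow> K c = c"
  shows "K x = P x"
proof -
  have P_C: "P c = c" if "c \<in> C" for c
    using that C sa_projection_range_iff[OF P] unfolding orthonormal_basis_of_def by blast
  have lin: "linear K" "linear P" using K(1) P by (simp_all add: bounded_linear.linear sa_projection_def)
  have "K e = P e" if "e \<in> C \<union> J ` C" for e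
    using that P_C K(2,4) P by (auto simp: sa_projection_def)
  then have "K y = P y" if "y \<in> span (C \<union> J ` C)" for y
    using linear_eq_on_span[OF lin _ that] by blast
  moreover have "range P \<subseteq> closure (span (C \<union> J ` C))"
    using C by (simp add: orthonormal_basis_of_def)
  moreover have "continuous_on UNIV K" "continuous_on UNIV P"
    using lin K(1) P by (simp_all add: linear_continuous_on sa_projection_def)
  moreover have "P (P x) = P x" for x using P by (simp add: sa_projection_def)
  ultimately show ?thesis using continuous_eq_through_projection[of K P] K(3) by blast
qed

section \<open>Partial isometries\<close>

definition partial_isometry ::
    "('a::real_inner \<Rightarrow> 'a) \<Rightarrow> ('a \<Rightarrow> 'a) \<Rightarrow> ('a \<Rightarrow> 'a) \<Rightarrow> ('a \<Rightarrow> 'a) \<Rightarrow> ('a \<Rightarrow> 'a) \<Rightarrow> bool" where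
  "partial_isometry J P R T S \<longleftrightarrow> bounded_linear T \<and> bounded_linear S
     \<and> (\<forall>x. T (J x) = J (T x)) \<and> (\<forall>x. S (J x) = J (S x)) \<and> (\<forall>x y. inner (T x) y = inner x (S y))
     \<and> (\<forall>x. S (T x) = P x) \<and> (\<forall>y. T (S y) = R y)"

lemma partial_isometry_swap:
  assumes "partial_isometry J P R T S"
  shows "partial_isometry J R P S T"
proof -
  have adj: "inner (T x) y = inner x (S y)" for x y using assms by (simp add: partial_isometry_def)
  have "inner (S y) x = inner y (T x)" for x y
    using adj[of x y] inner_commute[of x "S y"] inner_commute[of y "T x"] by simp
  then show ?thesis using assms by (simp add: partial_isometry_def)
qed

lemma comp_projection_if_adjoint_comp_eq:
  assumes T: "linear T" and adj: "\<And>x y. inner (T x) y = inner x (S y)"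
    and ST: "\<And>x. S (T x) = P x" and P: "sa_projection J P"
  shows "T (P x) = T x"
proof -
  define d where "d = x - P x"
  have "P d = 0" using P by (simp add: d_def sa_projection_def linear_diff bounded_linear.linear)
  then have "inner (T d) (T d) = 0" using adj ST by simp
  then have "T d = 0" by simp
  then show ?thesis using T by (simp add: d_def linear_diff)
qed

lemma partial_isometry_comp_initial:
  assumes "partial_isometry J P R T S" and "sa_projection J P"
  shows "T (P x) = T x"
  by (rule comp_projection_if_adjoint_comp_eq[where S=S and J=J])
    (use assms in \<open>simp_all add: partial_isometry_def bounded_linear.linear\<close>)

lemma partial_isometry_final_comp:
  assumes "partial_isometry J P R T S" and "sa_projection J P"
  shows "R (T x) = T x"
proof -
  have TS: "T (S y) = R y" and ST: "S (T y) = P y" for y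
    using assms(1) by (simp_all add: partial_isometry_def)
  have "R (T x) = T (S (T x))" by (simp only: TS)
  also have "\<dots> = T x" by (simp only: ST partial_isometry_comp_initial[OF assms])
  finally show ?thesis .
qed

lemma same_rank_partial_isometry:
  fixes J :: "'a::{real_inner, complete_space} \<Rightarrow> 'a"
  assumes J: "scalar_structure J" and P: "sa_projection J P" and R: "sa_projection J R"
    and rank: "same_rank J R P"
  obtains T S where "partial_isometry J P R T S"
proof -
  obtain B C h where B: "orthonormal_basis_of J B (range R)" and C: "orthonormal_basis_of J C (range P)"
    and h: "bij_betw h B C"
    using rank by (auto simp: same_rank_def eqpoll_def)
  obtain T where T: "bounded_linear T" "\<And>x. T (J x) = J (T x)" "\<And>x. T (P x) = T x"
    "\<And>x. R (T x) = T x" "\<And>x y. inner (T x) (T y) = inner (P x) (P y)"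
    "\<And>c. c \<in> C \<Longrightarrow> T c = inv_into B h c"
    using orthonormal_bases_bij_extension[OF J P R C B bij_betw_inv_into[OF h]] by blast
  obtain S where S: "bounded_linear S" "\<And>x. S (J x) = J (S x)" "\<And>x. S (R x) = S x"
    "\<And>x. P (S x) = S x" "\<And>x y. inner (S x) (S y) = inner (R x) (R y)" "\<And>b. b \<in> B \<Longrightarrow> S b = h b"
    by (rule orthonormal_bases_bij_extension[OF J R P B C h]) (rule that)
  have ST: "S (T x) = P x" for x
  proof (rule sa_projection_eq_if_fixes_basis[OF P C])
    show "bounded_linear (\<lambda>x. S (T x))" using bounded_linear_compose[OF S(1) T(1)] .
    show "S (T c) = c" if "c \<in> C" for c
      using that T(6) S(6) bij_betw_inv_into_right[OF h] bij_betwE[OF bij_betw_inv_into[OF h]] by simp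
  qed (simp_all add: S(2) T(2,3))
  have TS: "T (S y) = R y" for y
  proof (rule sa_projection_eq_if_fixes_basis[OF R B])
    show "bounded_linear (\<lambda>x. T (S x))" using bounded_linear_compose[OF T(1) S(1)] .
    show "T (S b) = b" if "b \<in> B" for b
      using that T(6) S(6) bij_betw_inv_into_left[OF h] bij_betwE[OF h] by simp
  qed (simp_all add: S(2,3) T(2))
  have "inner (T x) y = inner x (S y)" for x y
  proof -
    have "inner (T x) y = inner (R (T x)) y" by (simp only: T(4))
    also have "\<dots> = inner (T x) (T (S y))" using R by (simp add: sa_projection_def TS)
    also have "\<dots> = inner x (P (P (S y)))" using P by (simp add: sa_projection_def T(5))
    also have "\<dots> = inner x (S y)" using P by (simp add: sa_projection_def S(4))
    finally show ?thesis .
  qed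
  then have "partial_isometry J P R T S" using T(1,2) S(1,2) ST TS by (simp add: partial_isometry_def)
  then show thesis by (rule that)
qed

lemma same_rank_partial_isometries:
  fixes J :: "'a::{real_inner, complete_space} \<Rightarrow> 'a"
  assumes J: "scalar_structure J" and P: "sa_projection J P" and R: "\<And>a. a < n \<Longrightarrow> sa_projection J (R a)"
    and rank: "\<And>a. a < n \<Longrightarrow> same_rank J (R a) P"
  obtains T S where "\<And>a. a < n \<Longrightarrow> partial_isometry J P (R a) (T a) (S a)"
proof -
  have "\<forall>a. \<exists>T S. a < n \<longrightarrow> partial_isometry J P (R a) T S"
    using same_rank_partial_isometry[OF J P R rank] by metis
  then show thesis using that by metis
qed

lemma partial_isometry_of_adjoint_comp:
  assumes V: "bounded_linear V" "\<And>x. V (J x) = J (V x)" and W: "bounded_linear W" "\<And>x. W (J x) = J (W x)"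
    and adj: "\<And>x y. inner (V x) y = inner x (W y)" and WV: "\<And>x. W (V x) = P x"
    and P: "sa_projection J P"
  shows "sa_projection J (\<lambda>x. V (W x))" and "partial_isometry J P (\<lambda>x. V (W x)) V W"
proof -
  have VP: "V (P x) = V x" for x
    using comp_projection_if_adjoint_comp_eq[OF bounded_linear.linear[OF V(1)] adj WV P] .
  show "sa_projection J (\<lambda>x. V (W x))"
    unfolding sa_projection_def
    using bounded_linear_compose[OF V(1) W(1)] V(2) W(2) adj VP WV
    by (simp add: inner_commute)
  show "partial_isometry J P (\<lambda>x. V (W x)) V W"
    using V W adj WV by (simp add: partial_isometry_def)
qed

lemma partial_isometry_range:
  assumes P: "sa_projection J P" and R: "sa_projection J R" and T: "partial_isometry J P R T S"
  shows "range R = T ` range P"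
proof
  show "range R \<subseteq> T ` range P"
  proof
    fix y assume "y \<in> range R"
    then have "y = T (S y)" using T sa_projection_range_iff[OF R] by (simp add: partial_isometry_def)
    moreover have "S y = P (S y)"
      using partial_isometry_final_comp[OF partial_isometry_swap[OF T] R] by simp
    ultimately show "y \<in> T ` range P" by (metis rangeI image_eqI)
  qed
  show "T ` range P \<subseteq> range R"
    using partial_isometry_final_comp[OF T P] by (metis image_subsetI rangeI)
qed

lemma partial_isometry_orthonormal_basis_image:
  assumes P: "sa_projection J P" and R: "sa_projection J R" and T: "partial_isometry J P R T S"
    and B: "orthonormal_basis_of J B (range P)"
  shows "inj_on T B" and "orthonormal_basis_of J (T ` B) (range R)"
proof -
  have lin_T: "linear T" and T_J: "\<And>x. T (J x) = J (T x)"
    and T_inner: "\<And>x y. inner (T x) (T y) = inner x (P y)"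
    using T by (simp_all add: partial_isometry_def bounded_linear.linear)
  have P_B: "P b = b" if "b \<in> B" for b
    using that B sa_projection_range_iff[OF P] unfolding orthonormal_basis_of_def by blast
  have P_J: "P (J x) = J (P x)" for x using P by (simp add: sa_projection_def)
  have inner_TB: "inner (T b) (T b') = inner b b'" "inner (T b) (J (T b')) = inner b (J b')"
    if "b \<in> B" "b' \<in> B" for b b'
    using that T_inner P_B P_J by (simp_all flip: T_J)
  show inj: "inj_on T B"
  proof (rule inj_onI)
    fix b b' assume b: "b \<in> B" "b' \<in> B" and "T b = T b'"
    then have "inner b b' = inner b b" using inner_TB by metis
    then show "b = b'" using orthonormal_basis_of_inner[OF B] b by (auto split: if_splits)
  qed
  define E where "E = B \<union> J ` B"
  have "T ` B \<union> J ` T ` B = T ` E" by (simp add: E_def image_Un image_image T_J)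
  then have span_TE: "span (T ` B \<union> J ` T ` B) = T ` span E" by (simp add: span_linear_image[OF lin_T])
  have closure_E: "closure (span E) = range P" using B by (simp add: orthonormal_basis_of_def E_def)
  note range_R = partial_isometry_range[OF P R T]
  have "closure (span (T ` B \<union> J ` T ` B)) = range R"
  proof
    have "T ` span E \<subseteq> range R" using closure_subset[of "span E"] closure_E range_R by blast
    then show "closure (span (T ` B \<union> J ` T ` B)) \<subseteq> range R"
      unfolding span_TE by (rule closure_minimal[OF _ sa_projection_closed_range[OF R]])
    have "range R = T ` closure (span E)" using range_R closure_E by simp
    also have "\<dots> \<subseteq> closure (T ` span E)"
      using T by (intro closure_bounded_linear_image_subset) (simp add: partial_isometry_def)
    finally show "range R \<subseteq> closure (span (T ` B \<union> J ` T ` B))" by (simp add: span_TE)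
  qed
  moreover have "T ` B \<subseteq> range R" using B range_R by (auto simp: orthonormal_basis_of_def)
  moreover have "norm (T b) = 1" if "b \<in> B" for b
    using that inner_TB(1)[OF that that] B by (simp add: orthonormal_basis_of_def norm_eq_1)
  moreover have "inner (T b) (T b') = 0 \<and> inner (T b) (J (T b')) = 0"
    if "b \<in> B" "b' \<in> B" "b \<noteq> b'" for b b'
    using that inner_TB[OF that(1,2)] B by (simp add: orthonormal_basis_of_def)
  ultimately show "orthonormal_basis_of J (T ` B) (range R)"
    unfolding orthonormal_basis_of_def by (auto simp: inj_on_eq_iff[OF inj])
qed

lemma partial_isometry_same_rank:
  assumes "sa_projection J P" "sa_projection J R" "partial_isometry J P R T S"
    and "orthonormal_basis_of J B (range P)"
  shows "same_rank J R P"
  using partial_isometry_orthonormal_basis_image[OF assms] assms(4) inj_on_image_eqpoll_self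
  unfolding same_rank_def by blast

lemma partial_isometries_adjoint_comp:
  assumes P0: "sa_projection J P0" and P: "\<And>a. a < n \<Longrightarrow> sa_projection J (P a)"
    and orth: "\<And>a b x. a < n \<Longrightarrow> b < n \<Longrightarrow> a \<noteq> b \<Longrightarrow> P a (P b x) = 0"
    and T: "\<And>a. a < n \<Longrightarrow> partial_isometry J P0 (P a) (T a) (S a)"
    and "a < n" "b < n"
  shows "S b (T a x) = (if a = b then P0 x else 0)"
proof (cases "a = b")
  case False
  have "S b (T a x) = S b (P b (P a (T a x)))"
    using partial_isometry_final_comp[OF T P0, of a] \<open>a < n\<close> \<open>b < n\<close>
      partial_isometry_comp_initial[OF partial_isometry_swap[OF T] P, of b] by simp
  also have "\<dots> = 0"
    using orth[of b a] T[of b] \<open>a < n\<close> \<open>b < n\<close> False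
    by (simp add: partial_isometry_def linear_0 bounded_linear.linear)
  finally show ?thesis using False by simp
qed (use T \<open>a < n\<close> in \<open>simp add: partial_isometry_def\<close>)

lemma partial_isometry_combination:
  fixes T S :: "nat \<Rightarrow> 'a::real_inner \<Rightarrow> 'a"
  assumes J: "linear J" and P0: "sa_projection J P0" and P: "\<And>a. a < n \<Longrightarrow> sa_projection J (P a)"
    and orth: "\<And>a b x. a < n \<Longrightarrow> b < n \<Longrightarrow> a \<noteq> b \<Longrightarrow> P a (P b x) = 0"
    and T: "\<And>a. a < n \<Longrightarrow> partial_isometry J P0 (P a) (T a) (S a)"
    and c: "(\<Sum>a<n. c a ^ 2) = 1"
  defines "V \<equiv> \<lambda>x. \<Sum>a<n. c a *\<^sub>R T a x" and "W \<equiv> \<lambda>y. \<Sum>b<n. c b *\<^sub>R S b y"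
  shows "sa_projection J (\<lambda>x. V (W x))" and "partial_isometry J P0 (\<lambda>x. V (W x)) V W"
proof -
  have bl: "bounded_linear (T a)" "bounded_linear (S a)" if "a < n" for a
    using T[OF that] by (simp_all add: partial_isometry_def)
  note ST = partial_isometries_adjoint_comp[where n=n and P=P and T=T and S=S, OF P0 P orth T]
  have "W (V x) = (\<Sum>b<n. c b *\<^sub>R (\<Sum>a<n. c a *\<^sub>R S b (T a x)))" for x
    unfolding V_def W_def using bl
    by (simp add: linear_sum[OF bounded_linear.linear] linear_scale[OF bounded_linear.linear])
  also have "\<dots> x = (\<Sum>b<n. c b *\<^sub>R c b *\<^sub>R P0 x)" for x
    by (rule sum.cong) (simp_all add: ST if_distrib[of "scaleR _"] sum.delta cong: if_cong)
  also have "\<dots> x = P0 x" for x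
    using c by (simp add: scaleR_sum_left[symmetric] power2_eq_square)
  finally have WV: "W (V x) = P0 x" for x .
  have bl_V: "bounded_linear V" and bl_W: "bounded_linear W"
    unfolding V_def W_def using bl
    by (auto intro!: bounded_linear_sum bounded_linear_compose[OF bounded_linear_scaleR_right])
  have V_J: "V (J x) = J (V x)" and W_J: "W (J x) = J (W x)" for x
    using T unfolding V_def W_def
    by (simp_all add: partial_isometry_def linear_sum[OF J] linear_scale[OF J])
  have adj: "inner (V x) y = inner x (W y)" for x y
    using T by (simp add: V_def W_def inner_sum_left inner_sum_right partial_isometry_def)
  show "sa_projection J (\<lambda>x. V (W x))" "partial_isometry J P0 (\<lambda>x. V (W x)) V W"
    using partial_isometry_of_adjoint_comp[OF bl_V V_J bl_W W_J adj WV P0] by blast+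
qed

section \<open>Unit-norm frames\<close>

definition rotate_columns :: "nat \<Rightarrow> nat \<Rightarrow> real \<Rightarrow> (nat \<Rightarrow> nat \<Rightarrow> real) \<Rightarrow> nat \<Rightarrow> nat \<Rightarrow> real" where
  "rotate_columns j1 j2 t F a j =
     (if j = j1 then cos t * F a j1 + sin t * F a j2
      else if j = j2 then cos t * F a j2 - sin t * F a j1 else F a j)"

lemma rotate_columns_row_inner:
  assumes "j1 < m" "j2 < m" "j1 \<noteq> j2"
  shows "(\<Sum>j<m. rotate_columns j1 j2 t F a j * rotate_columns j1 j2 t F b j) = (\<Sum>j<m. F a j * F b j)"
proof -
  have split: "(\<Sum>j<m. g j) = g j1 + g j2 + (\<Sum>j\<in>{..<m} - {j1, j2}. g j)" for g :: "nat \<Rightarrow> real"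
  proof -
    have "{..<m} = insert j1 (insert j2 ({..<m} - {j1, j2}))" using assms by auto
    then show ?thesis using assms(3) by (metis finite_Diff finite_lessThan finite_insert insert_iff
      Diff_iff sum.insert add.assoc)
  qed
  have "(cos t * x1 + sin t * x2) * (cos t * y1 + sin t * y2)
      + (cos t * x2 - sin t * x1) * (cos t * y2 - sin t * y1)
      = ((sin t)\<^sup>2 + (cos t)\<^sup>2) * (x1 * y1 + x2 * y2)" for x1 x2 y1 y2
    by algebra
  then show ?thesis
    unfolding split[of "\<lambda>j. rotate_columns j1 j2 t F a j * rotate_columns j1 j2 t F b j"] split
    using assms(3) by (simp add: rotate_columns_def)
qed

lemma rotate_columns_unit_column:
  assumes "(\<Sum>a<n. F a j1 ^ 2) \<le> 1" "1 \<le> (\<Sum>a<n. F a j2 ^ 2)"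
  obtains t where "(\<Sum>a<n. rotate_columns j1 j2 t F a j1 ^ 2) = 1"
proof -
  have "\<exists>t\<ge>0. t \<le> pi / 2 \<and> (\<Sum>a<n. (cos t * F a j1 + sin t * F a j2) ^ 2) = 1"
    using assms by (intro IVT') (auto intro!: continuous_intros)
  then show thesis using that by (auto simp: rotate_columns_def)
qed

lemma sum_eq_card_below_above_one:
  fixes f :: "'a \<Rightarrow> real"
  assumes "finite A" "sum f A = real (card A)" "x \<in> A" "f x \<noteq> 1"
  obtains y z where "y \<in> A" "f y < 1" "z \<in> A" "1 < f z"
proof -
  have "\<exists>y\<in>A. f y < 1"
  proof (rule ccontr)
    assume "\<not> ?thesis"
    then have "sum (\<lambda>_. 1) A < sum f A"
      using assms by (intro sum_strict_mono_ex1) (auto simp: not_less order_le_less)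
    then show False using assms(2) by simp
  qed
  moreover have "\<exists>z\<in>A. 1 < f z"
  proof (rule ccontr)
    assume "\<not> ?thesis"
    then have "sum f A < sum (\<lambda>_. 1) A"
      using assms by (intro sum_strict_mono_ex1) (auto simp: not_less order_le_less)
    then show False using assms(2) by simp
  qed
  ultimately show thesis using that by blast
qed

lemma rotate_columns_fix_defective_column:
  fixes F :: "nat \<Rightarrow> nat \<Rightarrow> real"
  assumes trace: "(\<Sum>j<m. \<Sum>a<n. F a j ^ 2) = real m"
    and defect: "j0 < m" "(\<Sum>a<n. F a j0 ^ 2) \<noteq> 1"
  obtains j1 j2 t where "j1 < m" "j2 < m" "j1 \<noteq> j2"
    and "{j. j < m \<and> (\<Sum>a<n. rotate_columns j1 j2 t F a j ^ 2) \<noteq> 1}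
           \<subset> {j. j < m \<and> (\<Sum>a<n. F a j ^ 2) \<noteq> 1}"
proof -
  define N where "N j = (\<Sum>a<n. F a j ^ 2)" for j
  obtain j1 j2 where j1: "j1 < m" "N j1 < 1" and j2: "j2 < m" "1 < N j2"
    using sum_eq_card_below_above_one[of "{..<m}" N] trace defect by (auto simp: N_def)
  then obtain t where t: "(\<Sum>a<n. rotate_columns j1 j2 t F a j1 ^ 2) = 1"
    using rotate_columns_unit_column[where n=n and F=F and ?j1.0=j1 and ?j2.0=j2] by (auto simp: N_def)
  have "{j. j < m \<and> (\<Sum>a<n. rotate_columns j1 j2 t F a j ^ 2) \<noteq> 1}
      \<subseteq> {j. j < m \<and> N j \<noteq> 1} - {j1}"
  proof
    fix j assume j: "j \<in> {j. j < m \<and> (\<Sum>a<n. rotate_columns j1 j2 t F a j ^ 2) \<noteq> 1}"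
    then have "j \<noteq> j1" using t by auto
    moreover have "N j \<noteq> 1"
      using j j2 \<open>j \<noteq> j1\<close> by (cases "j = j2") (auto simp: N_def rotate_columns_def)
    ultimately show "j \<in> {j. j < m \<and> N j \<noteq> 1} - {j1}" using j by blast
  qed
  then show thesis using that[OF j1(1) j2(1)] j1 j2 by (force simp: N_def)
qed

lemma unit_norm_frame_exists:
  fixes r :: "nat \<Rightarrow> real"
  assumes r: "\<And>a. a < n \<Longrightarrow> r a \<ge> 0" and r_sum: "(\<Sum>a<n. r a) = real m" and "n \<le> m"
  obtains F :: "nat \<Rightarrow> nat \<Rightarrow> real" where "\<And>j. j < m \<Longrightarrow> (\<Sum>a<n. F a j ^ 2) = 1"
    and "\<And>a b. a < n \<Longrightarrow> b < n \<Longrightarrow> (\<Sum>j<m. F a j * F b j) = (if a = b then r a else 0)"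
proof -
  define gram :: "(nat \<Rightarrow> nat \<Rightarrow> real) \<Rightarrow> bool" where
    "gram F \<longleftrightarrow> (\<forall>a<n. \<forall>b<n. (\<Sum>j<m. F a j * F b j) = (if a = b then r a else 0))" for F
  define bad where "bad F = {j. j < m \<and> (\<Sum>a<n. F a j ^ 2) \<noteq> 1}" for F :: "nat \<Rightarrow> nat \<Rightarrow> real"
  have "\<exists>F'. gram F' \<and> bad F' = {}" if "gram F" for F
    using that
  proof (induction "card (bad F)" arbitrary: F rule: less_induct)
    case less
    show ?case
    proof (cases "bad F = {}")
      case False
      have "(\<Sum>j<m. \<Sum>a<n. F a j ^ 2) = (\<Sum>a<n. \<Sum>j<m. F a j * F a j)"
        by (subst sum.swap) (simp add: power2_eq_square)
      also have "\<dots> = real m" using less.prems r_sum by (simp add: gram_def)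
      finally obtain j1 j2 t where "j1 < m" "j2 < m" "j1 \<noteq> j2" and "bad (rotate_columns j1 j2 t F) \<subset> bad F"
        using False rotate_columns_fix_defective_column[where F=F and m=m and n=n] unfolding bad_def by blast
      moreover from this have "gram (rotate_columns j1 j2 t F)"
        using less.prems rotate_columns_row_inner by (simp add: gram_def)
      ultimately show ?thesis
        using less.hyps[of "rotate_columns j1 j2 t F"] by (simp add: psubset_card_mono bad_def)
    qed (use less.prems in blast)
  qed
  moreover have "gram (\<lambda>a j. if a = j then sqrt (r a) else 0)"
    using r \<open>n \<le> m\<close> by (auto simp: gram_def if_distrib[of "\<lambda>x. x * _"] sum.delta cong: if_cong)
  ultimately obtain F where F: "gram F" "bad F = {}" by blast
  show thesis
  proof (rule that)
    show "(\<Sum>a<n. F a j ^ 2) = 1" if "j < m" for j using F(2) that by (auto simp: bad_def)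
    show "(\<Sum>j<m. F a j * F b j) = (if a = b then r a else 0)" if "a < n" "b < n" for a b
      using F(1) that by (simp add: gram_def)
  qed
qed

lemma sum_frame_expansion:
  fixes T S R :: "nat \<Rightarrow> 'a::real_vector \<Rightarrow> 'a"
  assumes T: "\<And>a. a < n \<Longrightarrow> linear (T a)" and TS: "\<And>a y. a < n \<Longrightarrow> T a (S a y) = R a y"
    and F: "\<And>a b. a < n \<Longrightarrow> b < n \<Longrightarrow> (\<Sum>j<m. F a j * F b j) = (if a = b then r a else 0)"
  shows "(\<Sum>j<m. \<Sum>a<n. F a j *\<^sub>R T a (\<Sum>b<n. F b j *\<^sub>R S b x)) = (\<Sum>a<n. r a *\<^sub>R R a x)"
proof -
  have "(\<Sum>j<m. \<Sum>a<n. F a j *\<^sub>R T a (\<Sum>b<n. F b j *\<^sub>R S b x))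
      = (\<Sum>j<m. \<Sum>a<n. \<Sum>b<n. (F a j * F b j) *\<^sub>R T a (S b x))"
    using T by (simp add: linear_sum linear_scale scaleR_sum_right)
  also have "\<dots> = (\<Sum>a<n. \<Sum>b<n. (\<Sum>j<m. F a j * F b j) *\<^sub>R T a (S b x))"
    by (simp add: sum.swap[of _ "{..<m}"] scaleR_sum_left)
  also have "\<dots> = (\<Sum>a<n. r a *\<^sub>R R a x)"
    using F TS by (simp add: if_distrib[of "\<lambda>s. s *\<^sub>R _"] sum.delta cong: if_cong)
  finally show ?thesis .
qed

theorem lemma7:
  fixes J :: "'a::{real_inner, complete_space} \<Rightarrow> 'a"
    and P :: "nat \<Rightarrow> 'a \<Rightarrow> 'a"
    and rr :: "nat \<Rightarrow> real"
    and n m :: nat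
  assumes field: "scalar_structure J"
    and proj: "\<And>i. i < n \<Longrightarrow> sa_projection J (P i)"
    and orth: "\<And>i j x. i < n \<Longrightarrow> j < n \<Longrightarrow> i \<noteq> j \<Longrightarrow> P i (P j x) = 0"
    and nonzero: "\<And>i. i < n \<Longrightarrow> range (P i) \<noteq> {0}"
    and rank: "\<And>i. i < n \<Longrightarrow> same_rank J (P i) (P 0)"
    and nonneg: "\<And>i. i < n \<Longrightarrow> rr i \<ge> 0"
    and rsum: "(\<Sum>i<n. rr i) = real m"
    and mn: "m \<ge> n"
  shows "\<exists>Q :: nat \<Rightarrow> 'a \<Rightarrow> 'a.
           (\<forall>j<m. sa_projection J (Q j) \<and> same_rank J (Q j) (P 0))
           \<and> (\<forall>x. (\<Sum>i<n. rr i *\<^sub>R P i x) = (\<Sum>j<m. Q j x))"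
proof (cases "n = 0")
  case True
  then show ?thesis using rsum by simp
next
  case False
  have P0: "sa_projection J (P 0)" using proj False by simp
  obtain B0 where B0: "orthonormal_basis_of J B0 (range (P 0))"
    using rank[of 0] False by (auto simp: same_rank_def)
  obtain T S where TS: "\<And>a. a < n \<Longrightarrow> partial_isometry J (P 0) (P a) (T a) (S a)"
    using same_rank_partial_isometries[where n=n and R=P, OF field P0 proj rank] by blast
  obtain F where F_col: "\<And>j. j < m \<Longrightarrow> (\<Sum>a<n. F a j ^ 2) = 1"
    and F_row: "\<And>a b. a < n \<Longrightarrow> b < n \<Longrightarrow> (\<Sum>j<m. F a j * F b j) = (if a = b then rr a else 0)"
    using unit_norm_frame_exists[OF nonneg rsum mn] by blast
  define Q where "Q j = (\<lambda>x. \<Sum>a<n. F a j *\<^sub>R T a (\<Sum>b<n. F b j *\<^sub>R S b x))" for j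
  have "sa_projection J (Q j) \<and> same_rank J (Q j) (P 0)" if "j < m" for j
  proof -
    note Q_j = partial_isometry_combination[where P=P and T=T and S=S and c="\<lambda>a. F a j",
        OF scalar_structure_bounded_linear[OF field, THEN bounded_linear.linear]
          P0 proj orth TS F_col[OF that], folded Q_def]
    show ?thesis using Q_j partial_isometry_same_rank[OF P0 Q_j B0] by simp
  qed
  moreover have "(\<Sum>i<n. rr i *\<^sub>R P i x) = (\<Sum>j<m. Q j x)" for x
    unfolding Q_def using sum_frame_expansion[where T=T and S=S and R=P, OF _ _ F_row] TS
    by (simp add: partial_isometry_def bounded_linear.linear)
  ultimately show ?thesis by blast
qed

end
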